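(* Let $a,b\in\mathbb{C}$ with $b\neq0$, and suppose $\cdot_\lambda\cdot$ is a compatible left-symmetric conformal algebraic structure on $\mathcal{W}(a,b)=\mathbb{C}[\partial]L\oplus\mathbb{C}[\partial]W$ such that $\mathbb{C}[\partial]L$ is a left-symmetric conformal subalgebra. Let $c\in\mathbb{C}$ with $L_\lambda L=(\partial+\lambda+c)L$, and write $L_\lambda W=g_1L+g_2W$, $W_\lambda L=h_1L+h_2W$, $W_\lambda W=k_1L+k_2W$ with $g_i,h_i,k_i\in\mathbb{C}[\lambda,\partial]$. Assume $g_2(\lambda,\partial)=\partial+(a-1)\lambda+b+c$ and $h_2(\lambda,\partial)=\partial+\lambda+c$. Then $h_1=g_1=k_1=k_2=0$.
   Context: A conformal algebra is a $\mathbb{C}[\partial]$-module $R$ with a $\mathbb{C}$-bilinear map $R\times R\to R[\lambda]$, $(x,y)\mapsto x_\lambda y$, satisfying $(\partial x)_\lambda y=-\lambda\, x_\lambda y$ and $x_\lambda(\partial y)=(\partial+\lambda)\,x_\lambda y$. For $x,y\in R$, $y_{-\lambda-\partial}x$ means: write $y_\mu x=\sum_j \mu^j z_j$ and set $y_{-\lambda-\partial}x=\sum_j(-\lambda-\partial)^j z_j$. A left-symmetric conformal algebra is a conformal algebra with $(x_\lambda y)_{\lambda+\mu}z-x_\lambda(y_\mu z)=(y_\mu x)_{\lambda+\mu}z-y_\mu(x_\lambda z)$. A compatible left-symmetric conformal algebraic structure on a Lie conformal algebra $(R,[\cdot_\lambda\cdot])$ is a left-symmetric conformal product on the same $\mathbb{C}[\partial]$-module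 with $x_\lambda y-y_{-\lambda-\partial}x=[x_\lambda y]$ for all $x,y$. $\mathcal{W}(a,b)$ is the free $\mathbb{C}[\partial]$-module with basis $L,W$ and Lie conformal brackets $[L_\lambda L]=(\partial+2\lambda)L$, $[L_\lambda W]=(\partial+a\lambda+b)W$, $[W_\lambda W]=0$. "$\mathbb{C}[\partial]L$ is a left-symmetric conformal subalgebra" means $L_\lambda L\in(\mathbb{C}[\partial]L)[\lambda]$; in that case $L_\lambda L=(\partial+\lambda+c)L$ for some $c\in\mathbb{C}$. *)

theory Defs
  imports Complex_Main "HOL-Computational_Algebra.Polynomial"
begin

text \<open>An element sum_i p_i(d) e_i is represented by its
coefficient functions (basis => complex => complex), each required to be a polynomial in d.
A lambda-product is determined (by sesquilinearity) by structure constants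
S i j k lam d = coefficient of e_k in (e_i)_lam e_j, a polynomial in (lam, d).
Identities in R[lam], R[lam,mu] are checked pointwise in the complex variables, which is
equivalent for polynomials over C.\<close>

datatype basis = Lb | Wb

type_synonym elem = "basis \<Rightarrow> complex \<Rightarrow> complex"
type_synonym struct = "basis \<Rightarrow> basis \<Rightarrow> basis \<Rightarrow> complex \<Rightarrow> complex \<Rightarrow> complex"

definition is_poly1 :: "(complex \<Rightarrow> complex) \<Rightarrow> bool" where
  "is_poly1 f \<longleftrightarrow> (\<exists>p. \<forall>d. f d = poly p d)"

definition is_poly2 :: "(complex \<Rightarrow> complex \<Rightarrow> complex) \<Rightarrow> bool" where
  "is_poly2 f \<longleftrightarrow> (\<exists>p :: complex poly poly. \<forall>l d. f l d = poly (poly p [:d:]) l)"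

definition is_elem :: "elem \<Rightarrow> bool" where
  "is_elem x \<longleftrightarrow> (\<forall>i. is_poly1 (x i))"

definition is_struct :: "struct \<Rightarrow> bool" where
  "is_struct S \<longleftrightarrow> (\<forall>i j k. is_poly2 (S i j k))"

text \<open>x_lam y, extended sesquilinearly: (p(d) e_i)_lam (q(d) e_j) = p(-lam) q(d+lam) (e_i)_lam e_j.\<close>
definition lprod :: "struct \<Rightarrow> elem \<Rightarrow> complex \<Rightarrow> elem \<Rightarrow> elem" where
  "lprod S x lam y = (\<lambda>k d. \<Sum>i\<in>{Lb, Wb}. \<Sum>j\<in>{Lb, Wb}. x i (- lam) * y j (d + lam) * S i j k lam d)"

text \<open>y_{-lam-d} x: substitute mu := -lam-d (d acting on the coefficients).\<close>
definition lprod_opp :: "struct \<Rightarrow> elem \<Rightarrow> complex \<Rightarrow> elem \<Rightarrow> elem" where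
  "lprod_opp S y lam x = (\<lambda>k d. lprod S y (- lam - d) x k d)"

definition left_symmetric :: "struct \<Rightarrow> bool" where
  "left_symmetric S \<longleftrightarrow>
     (\<forall>x y z lam mu. is_elem x \<longrightarrow> is_elem y \<longrightarrow> is_elem z \<longrightarrow>
        lprod S (lprod S x lam y) (lam + mu) z - lprod S x lam (lprod S y mu z)
      = lprod S (lprod S y mu x) (lam + mu) z - lprod S y mu (lprod S x lam z))"

text \<open>Lie conformal brackets of W(a,b); [W_lam L] is forced by skew-symmetry:
[W_lam L] = -[L_{-lam-d} W] = ((a-1) d + a lam - b) W.\<close>
definition Wab :: "complex \<Rightarrow> complex \<Rightarrow> struct" where
  "Wab a b i j k lam d =
    (case (i, j, k) of
       (Lb, Lb, Lb) \<Rightarrow> d + 2 * lam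
     | (Lb, Wb, Wb) \<Rightarrow> d + a * lam + b
     | (Wb, Lb, Wb) \<Rightarrow> (a - 1) * d + a * lam - b
     | _ \<Rightarrow> 0)"

definition compatible :: "struct \<Rightarrow> struct \<Rightarrow> bool" where
  "compatible S Br \<longleftrightarrow>
     (\<forall>x y lam. is_elem x \<longrightarrow> is_elem y \<longrightarrow>
        lprod S x lam y - lprod_opp S y lam x = lprod Br x lam y)"

end

theory Submission
  imports Defs
begin

text \<open>Write \<open>f(d)\<close> for the \<open>L\<close>-coefficient of \<open>L\<^sub>0 W\<close>. The left-symmetry identity on the
basis triples \<open>(W,L,L)\<close> and \<open>(L,W,W)\<close> expresses \<open>b h\<^sub>1\<close> and \<open>b k\<^sub>2\<close> through \<open>f\<close>. Since
\<open>[W\<^sub>\<lambda> W] = 0\<close>, the polynomial \<open>k\<^sub>2\<close> is skew-symmetric, which forces \<open>(d + c) f(d) = 0\<close>;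
hence \<open>f = 0\<close>, so \<open>h\<^sub>1 = k\<^sub>2 = 0\<close> as \<open>b \<noteq> 0\<close>, then \<open>g\<^sub>1 = 0\<close> by compatibility, and the
triple \<open>(L,W,W)\<close> once more yields \<open>2 b k\<^sub>1 = 0\<close>.\<close>

definition basis_vec :: "basis \<Rightarrow> elem" where
  "basis_vec i = (\<lambda>j d. if j = i then 1 else 0)"

lemma is_elem_basis_vec: "is_elem (basis_vec i)"
  unfolding is_elem_def is_poly1_def basis_vec_def
proof
  fix j
  show "\<exists>p. \<forall>d. (if j = i then 1 else 0) = poly p (d::complex)"
    by (rule exI[of _ "[:(if j = i then 1 else 0):]"]) simp
qed

lemma sum_basis: "(\<Sum>k\<in>{Lb, Wb}. F k) = F Lb + F Wb"
  by simp

lemma left_symmetric_structure_constants: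
  assumes "left_symmetric S"
  shows "(\<Sum>k\<in>{Lb,Wb}. S x y k lam (-(lam+mu)) * S k z m (lam+mu) d)
       - (\<Sum>k\<in>{Lb,Wb}. S y z k mu (d+lam) * S x k m lam d)
       = (\<Sum>k\<in>{Lb,Wb}. S y x k mu (-(lam+mu)) * S k z m (lam+mu) d)
       - (\<Sum>k\<in>{Lb,Wb}. S x z k lam (d+mu) * S y k m mu d)"
proof -
  let ?e = basis_vec
  have e: "lprod S (lprod S (?e x) lam (?e y)) (lam + mu) (?e z) - lprod S (?e x) lam (lprod S (?e y) mu (?e z))
      = lprod S (lprod S (?e y) mu (?e x)) (lam + mu) (?e z) - lprod S (?e y) mu (lprod S (?e x) lam (?e z))"
    using assms is_elem_basis_vec unfolding left_symmetric_def by blast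
  have "lprod S (lprod S (?e x) lam (?e y)) (lam + mu) (?e z) m d - lprod S (?e x) lam (lprod S (?e y) mu (?e z)) m d
      = lprod S (lprod S (?e y) mu (?e x)) (lam + mu) (?e z) m d - lprod S (?e y) mu (lprod S (?e x) lam (?e z)) m d"
    using fun_cong[OF fun_cong[OF e, of m], of d] by simp
  then show ?thesis
    by (simp only: lprod_def sum_basis)
       (cases x; cases y; cases z; simp add: basis_vec_def algebra_simps)
qed

lemma compatible_structure_constants:
  assumes "compatible S Br"
  shows "S i j k lam d - S j i k (-lam-d) d = Br i j k lam d"
proof -
  let ?e = basis_vec
  have e: "lprod S (?e i) lam (?e j) - lprod_opp S (?e j) lam (?e i) = lprod Br (?e i) lam (?e j)"
    using assms is_elem_basis_vec unfolding compatible_def by blast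
  have "lprod S (?e i) lam (?e j) k d - lprod_opp S (?e j) lam (?e i) k d = lprod Br (?e i) lam (?e j) k d"
    using fun_cong[OF fun_cong[OF e, of k], of d] by simp
  then show ?thesis
    by (simp add: lprod_opp_def lprod_def sum_basis; cases i; cases j; simp add: basis_vec_def)
qed

lemma is_poly1_poly2_at:
  assumes "is_poly2 f"
  shows "is_poly1 (f l)"
proof -
  obtain p :: "complex poly poly" where p: "\<And>l d. f l d = poly (poly p [:d:]) l"
    using assms unfolding is_poly2_def by blast
  have "\<exists>r. \<forall>d. poly (poly q [:d:]) l = poly r d" for q :: "complex poly poly"
  proof (induction q)
    case 0
    show ?case by (rule exI[of _ 0]) simp
  next
    case (pCons s q)
    then obtain r where r: "\<forall>d. poly (poly q [:d:]) l = poly r d" by blast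
    show ?case
      by (rule exI[of _ "pCons (poly s l) r"]) (simp add: r[rule_format, symmetric])
  qed
  then show ?thesis
    unfolding is_poly1_def p by metis
qed

lemma is_poly1_vanishing_off_point:
  assumes "is_poly1 f" and "\<And>y. y \<noteq> z \<Longrightarrow> f y = 0"
  shows "f y = 0"
proof -
  obtain p where p: "\<And>d. f d = poly p d"
    using assms(1) unfolding is_poly1_def by blast
  have "infinite (- {z})"
    by (simp add: Compl_eq_Diff_UNIV infinite_UNIV_char_0)
  moreover have "- {z} \<subseteq> {x. poly p x = 0}"
    using assms(2) p by auto
  ultimately have "p = 0"
    using poly_roots_finite infinite_super by blast
  then show ?thesis
    using p by simp
qed

locale Wab_compatible_lsca =
  fixes a b c :: complex and S :: struct
  assumes left_symmetric: "left_symmetric S"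
    and compatible: "compatible S (Wab a b)"
    and L_L_W: "\<And>lam d. S Lb Lb Wb lam d = 0"
    and L_L_L: "\<And>lam d. S Lb Lb Lb lam d = d + lam + c"
    and L_W_W: "\<And>lam d. S Lb Wb Wb lam d = d + (a - 1) * lam + b + c"
    and W_L_W: "\<And>lam d. S Wb Lb Wb lam d = d + lam + c"
begin

abbreviation "g\<^sub>1 \<equiv> S Lb Wb Lb"
abbreviation "h\<^sub>1 \<equiv> S Wb Lb Lb"
abbreviation "k\<^sub>1 \<equiv> S Wb Wb Lb"
abbreviation "k\<^sub>2 \<equiv> S Wb Wb Wb"

lemmas left_symmetry = left_symmetric_structure_constants[OF left_symmetric]
lemmas compatibility = compatible_structure_constants[OF compatible, unfolded Wab_def]
lemmas known_constants = L_L_W L_L_L L_W_W W_L_W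

lemma g1_eq_h1: "g\<^sub>1 lam d = h\<^sub>1 (-lam-d) d"
  using compatibility[of Lb Wb Lb lam d] by simp

lemma b_h1_eq: "b * h\<^sub>1 lam d = (d + lam + c) * g\<^sub>1 0 d"
  using left_symmetry[where x=Wb and y=Lb and z=Lb and m=Lb and lam=lam and mu=0 and d=d]
    g1_eq_h1[of 0 "-lam"]
  by (simp add: known_constants algebra_simps)

lemma b_k2_eq: "b * k\<^sub>2 mu d + (d + mu + c) * g\<^sub>1 0 (d + mu) = 0"
  using left_symmetry[where x=Lb and y=Wb and z=Wb and m=Wb and lam=0 and mu=mu and d=d]
    g1_eq_h1[of 0 "-mu"]
  by (simp add: known_constants algebra_simps)

lemma g1_zero_root: "(y + c) * g\<^sub>1 0 y = 0"
proof -
  have "k\<^sub>2 c (y - c) = k\<^sub>2 (-y) (y - c)"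
    using compatibility[of Wb Wb Wb c "y - c"] by simp
  then have "b * k\<^sub>2 c (y - c) = 0"
    using b_k2_eq[of "-y" "y - c"] by simp
  moreover have "b * k\<^sub>2 c (y - c) + (y + c) * g\<^sub>1 0 y = 0"
    using b_k2_eq[of c "y - c"] by simp
  ultimately show ?thesis
    by (metis add_0)
qed

lemma two_b_k1_eq_0:
  assumes "\<And>lam d. g\<^sub>1 lam d = 0"
  shows "2 * b * k\<^sub>1 mu d = 0"
  using left_symmetry[where x=Lb and y=Wb and z=Wb and m=Lb and lam=0 and mu=mu and d=d]
  by (simp add: assms known_constants algebra_simps)

end

theorem lemma3p5:
  fixes a b c :: complex and S :: struct
  assumes "b \<noteq> 0"
    and "is_struct S"
    and "left_symmetric S"
    and "compatible S (Wab a b)"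
    and "\<forall>lam d. S Lb Lb Wb lam d = 0"
    and "\<forall>lam d. S Lb Lb Lb lam d = d + lam + c"
    and "\<forall>lam d. S Lb Wb Wb lam d = d + (a - 1) * lam + b + c"
    and "\<forall>lam d. S Wb Lb Wb lam d = d + lam + c"
  shows "(\<forall>lam d. S Wb Lb Lb lam d = 0) \<and> (\<forall>lam d. S Lb Wb Lb lam d = 0)
       \<and> (\<forall>lam d. S Wb Wb Lb lam d = 0) \<and> (\<forall>lam d. S Wb Wb Wb lam d = 0)"
proof -
  interpret Wab_compatible_lsca a b c S
    using assms(3-8) by unfold_locales auto
  have "is_poly1 (S Lb Wb Lb 0)"
    using assms(2) is_poly1_poly2_at unfolding is_struct_def by blast
  then have f0: "S Lb Wb Lb 0 y = 0" for y
    by (rule is_poly1_vanishing_off_point[where z="-c"])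
       (metis g1_zero_root add.commute add_eq_0_iff mult_eq_0_iff)
  have h1: "S Wb Lb Lb lam d = 0" for lam d
    using b_h1_eq[of lam d] f0 assms(1) by simp
  have g1: "S Lb Wb Lb lam d = 0" for lam d
    using g1_eq_h1 h1 by simp
  have k2: "S Wb Wb Wb lam d = 0" for lam d
    using b_k2_eq[of lam d] f0 assms(1) by simp
  have k1: "S Wb Wb Lb lam d = 0" for lam d
    using two_b_k1_eq_0[OF g1, of lam d] assms(1) by simp
  show ?thesis
    using h1 g1 k1 k2 by blast
qed

end
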